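(* Let $p,q \geq 2$. Let $M_1, M_2 \subset \widetilde{\mathrm{Ein}}^{p,q}$ be two Minkowski patches with $M_1 \cap M_2 \neq \emptyset$. Then $\pi_{\mathbf{X}}(M_1 \cap M_2)$ is a connected component of $\pi_{\mathbf{X}}(M_1) \cap \pi_{\mathbf{X}}(M_2)$.
   Context: $\mathrm{Ein}^{p,q}$ is the set of isotropic lines of $\mathbb{R}^{p+1,q+1}$ with its induced conformal structure. $\widetilde{\mathrm{Ein}}^{p,q} \cong \mathbb{S}^p \times \mathbb{S}^q$ is the set of isotropic vectors of $\mathbb{R}^{p+1,q+1}$ of Euclidean norm $1$, and $\pi_{\mathbf{X}} : \widetilde{\mathrm{Ein}}^{p,q} \to \mathrm{Ein}^{p,q}$ the natural double (universal, since $\min(p,q)\ge2$) cover. For $x=[v]\in\mathrm{Ein}^{p,q}$, the Minkowski patch $M_x=\{[w]: B(v,w)\ne 0\}$; a Minkowski patch of $\widetilde{\mathrm{Ein}}^{p,q}$ is a connected component of $\pi_{\mathbf{X}}^{-1}(M_x)$ for some Minkowski patch $M_x$ of $\mathrm{Ein}^{p,q}$. *)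

theory Defs
  imports "HOL-Analysis.Analysis"
begin

text \<open>R^{p+1,q+1} is modelled as real^'p \<times> real^'q with CARD('p) = p+1, CARD('q) = q+1.\<close>

definition Bform :: "((real^'p) \<times> (real^'q)) \<Rightarrow> ((real^'p) \<times> (real^'q)) \<Rightarrow> real" where
  "Bform v w = fst v \<bullet> fst w - snd v \<bullet> snd w"

text \<open>Universal cover: isotropic vectors of Euclidean norm 1.\<close>
definition tEin :: "((real^'p) \<times> (real^'q)) set" where
  "tEin = {v. Bform v v = 0 \<and> norm v = 1}"

text \<open>A line is represented as the set of its points.\<close>
definition piX :: "((real^'p) \<times> (real^'q)) \<Rightarrow> ((real^'p) \<times> (real^'q)) set" where
  "piX v = range (\<lambda>t::real. t *\<^sub>R v)"

definition Ein :: "((real^'p) \<times> (real^'q)) set set" where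
  "Ein = {piX v | v. v \<noteq> 0 \<and> Bform v v = 0}"

definition Ein_top :: "((real^'p) \<times> (real^'q)) set topology" where
  "Ein_top = topology (\<lambda>U. U \<subseteq> Ein \<and> openin (top_of_set tEin) {v \<in> tEin. piX v \<in> U})"

definition mink_patch_Ein :: "((real^'p) \<times> (real^'q)) set \<Rightarrow> ((real^'p) \<times> (real^'q)) set set" where
  "mink_patch_Ein x = {y \<in> Ein. \<exists>v w. x = piX v \<and> y = piX w \<and> Bform v w \<noteq> 0}"

definition mink_patch_tEin :: "((real^'p) \<times> (real^'q)) set \<Rightarrow> bool" where
  "mink_patch_tEin M \<longleftrightarrow> (\<exists>x\<in>Ein. M \<in> components (tEin \<inter> piX -` mink_patch_Ein x))"

end

theory Submission
  imports Defs
begin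

text \<open>
  A Minkowski patch of the double cover is a half \<open>{u. B(w,u) > 0}\<close> of the preimage of some
  \<open>M\<^sub>x\<close>, with \<open>w\<close> scaled so that both of its components are unit vectors. The intersection of two
  such halves is connected: in the affine chart \<open>B(w\<^sub>1,y) = 1\<close> of the light cone, \<open>B(w\<^sub>2,\<cdot>)\<close> is
  either affine or, after completing the square, a multiple of a translated degenerate quadratic form
  of signature \<open>(p, q)\<close>, and since \<open>p, q \<ge> 2\<close> both the positive and the negative set of that form
  are connected. Finally \<open>g(u) = B(w\<^sub>1,u) B(w\<^sub>2,u)\<close> is invariant under \<open>u \<mapsto> -u\<close>, so
  \<open>\<pi>(M\<^sub>1) \<inter> \<pi>(M\<^sub>2)\<close> splits into the disjoint open sets \<open>\<pi>{g > 0} = \<pi>(M\<^sub>1 \<inter> M\<^sub>2)\<close> and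
  \<open>\<pi>{g < 0}\<close>.
\<close>

lemma Bform_commute: "Bform v w = Bform w v"
  by (simp add: Bform_def inner_commute)

lemma Bform_bilinear:
  "Bform (x + y) w = Bform x w + Bform y w"
  "Bform w (x + y) = Bform w x + Bform w y"
  "Bform (x - y) w = Bform x w - Bform y w"
  "Bform w (x - y) = Bform w x - Bform w y"
  "Bform (c *\<^sub>R x) w = c * Bform x w"
  "Bform w (c *\<^sub>R x) = c * Bform w x"
  "Bform (- x) w = - Bform x w"
  "Bform w (- x) = - Bform w x"
  "Bform 0 w = 0" "Bform w 0 = 0"
  by (simp_all add: Bform_def algebra_simps)

lemma Bform_eq_inner: "Bform a x = (fst a, - snd a) \<bullet> x"
  by (simp add: Bform_def inner_prod_def)

lemma continuous_on_Bform [continuous_intros]: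
  "continuous_on S f \<Longrightarrow> continuous_on S g \<Longrightarrow> continuous_on S (\<lambda>x. Bform (f x) (g x))"
  unfolding Bform_def by (intro continuous_intros)

definition perp_sq :: "'a::real_inner \<Rightarrow> 'a \<Rightarrow> real" where
  "perp_sq \<alpha> a = norm a ^ 2 - (a \<bullet> \<alpha>) ^ 2"

lemma perp_sq_eq_norm_sq:
  fixes \<alpha> :: "'a::real_inner"
  assumes "norm \<alpha> = 1"
  shows "perp_sq \<alpha> a = norm (a - (a \<bullet> \<alpha>) *\<^sub>R \<alpha>) ^ 2"
proof -
  have "\<alpha> \<bullet> \<alpha> = 1"
    using assms by (simp add: dot_square_norm)
  then show ?thesis
    unfolding perp_sq_def power2_norm_eq_inner
    by (simp add: inner_commute power2_eq_square algebra_simps)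
qed

lemma perp_sq_nonneg: "norm \<alpha> = 1 \<Longrightarrow> 0 \<le> perp_sq \<alpha> a"
  by (simp add: perp_sq_eq_norm_sq)

lemma convex_perp_sq_less:
  fixes \<alpha> :: "'a::euclidean_space"
  assumes "norm \<alpha> = 1"
  shows "convex {a. perp_sq \<alpha> a < c}"
proof -
  have "x ^ 2 < c \<longleftrightarrow> x < sqrt c" if "0 \<le> x" for x :: real
    using that by (smt (verit) real_le_lsqrt sqrt_le_D)
  then have "{a. perp_sq \<alpha> a < c} = (\<lambda>a. a - (a \<bullet> \<alpha>) *\<^sub>R \<alpha>) -` ball 0 (sqrt c)"
    by (auto simp: perp_sq_eq_norm_sq[OF assms])
  moreover have "linear (\<lambda>a. a - (a \<bullet> \<alpha>) *\<^sub>R \<alpha>)"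
    by (intro linear_compose_sub linearI) (auto simp: inner_add_left scaleR_add_left)
  ultimately show ?thesis
    by (simp add: convex_linear_vimage)
qed

lemma connected_perp_sq_pos:
  fixes \<beta> :: "'b::euclidean_space"
  assumes unit: "norm \<beta> = 1" and dim: "DIM('b) \<ge> 3"
  shows "connected {b. 0 < perp_sq \<beta> b}"
proof -
  define H where "H = {z. \<beta> \<bullet> z = 0}"
  have "subspace H"
    unfolding H_def by (rule subspace_hyperplane)
  moreover have "dim H = DIM('b) - 1"
    unfolding H_def using unit by (intro dim_hyperplane) auto
  ultimately have punctured: "connected (H - {0})"
    using dim by (intro connected_punctured_convex subspace_imp_convex) (simp_all add: aff_dim_subspace)
  have "connected ((\<lambda>(z, s). z + s *\<^sub>R \<beta>) ` ((H - {0}) \<times> (UNIV :: real set)))"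
    unfolding split_beta
    by (intro connected_continuous_image connected_Times connected_UNIV punctured) (intro continuous_intros)
  moreover have "(\<lambda>(z, s). z + s *\<^sub>R \<beta>) ` ((H - {0}) \<times> UNIV) = {b. 0 < perp_sq \<beta> b}"
  proof -
    have \<beta>\<beta>: "\<beta> \<bullet> \<beta> = 1"
      using unit by (simp add: dot_square_norm)
    have "b \<in> (\<lambda>(z, s). z + s *\<^sub>R \<beta>) ` ((H - {0}) \<times> UNIV) \<longleftrightarrow> b - (b \<bullet> \<beta>) *\<^sub>R \<beta> \<noteq> 0" for b
    proof
      assume "b \<in> (\<lambda>(z, s). z + s *\<^sub>R \<beta>) ` ((H - {0}) \<times> UNIV)"
      then obtain z s where "\<beta> \<bullet> z = 0" "z \<noteq> 0" "b = z + s *\<^sub>R \<beta>"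
        by (auto simp: H_def)
      then show "b - (b \<bullet> \<beta>) *\<^sub>R \<beta> \<noteq> 0"
        using \<beta>\<beta> by (simp add: inner_add_left inner_add_right inner_commute)
    next
      assume "b - (b \<bullet> \<beta>) *\<^sub>R \<beta> \<noteq> 0"
      moreover have "\<beta> \<bullet> (b - (b \<bullet> \<beta>) *\<^sub>R \<beta>) = 0"
        using \<beta>\<beta> by (simp add: inner_diff_right inner_commute)
      ultimately show "b \<in> (\<lambda>(z, s). z + s *\<^sub>R \<beta>) ` ((H - {0}) \<times> UNIV)"
        by (intro image_eqI[where x = "(b - (b \<bullet> \<beta>) *\<^sub>R \<beta>, b \<bullet> \<beta>)"]) (auto simp: H_def)
    qed
    moreover have "0 < perp_sq \<beta> b \<longleftrightarrow> b - (b \<bullet> \<beta>) *\<^sub>R \<beta> \<noteq> 0" for b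
      by (simp add: perp_sq_eq_norm_sq[OF unit])
    ultimately show ?thesis
      by blast
  qed
  ultimately show ?thesis
    by simp
qed

text \<open>Every slice \<open>{a. perp_sq \<alpha> a < perp_sq \<beta> b} \<times> {b}\<close> is convex and contains \<open>(0, b)\<close>,
  so it is glued to the connected spine \<open>{0} \<times> {b. 0 < perp_sq \<beta> b}\<close>.\<close>

lemma connected_perp_sq_less:
  fixes \<alpha> :: "'a::euclidean_space" and \<beta> :: "'b::euclidean_space"
  assumes "norm \<alpha> = 1" "norm \<beta> = 1" "DIM('b) \<ge> 3"
  shows "connected {(a, b). perp_sq \<alpha> a < perp_sq \<beta> b}"
proof -
  define B where "B = {b. 0 < perp_sq \<beta> b}"
  define T where "T b = ({a. perp_sq \<alpha> a < perp_sq \<beta> b} \<times> {b}) \<union> ({0} \<times> B)" for b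
  have "connected (T b)" if "b \<in> B" for b
    unfolding T_def
  proof (rule connected_Un)
    show "connected ({a. perp_sq \<alpha> a < perp_sq \<beta> b} \<times> {b})"
      using assms(1) by (intro connected_Times convex_connected convex_perp_sq_less connected_sing)
    show "connected ({0 :: 'a} \<times> B)"
      unfolding B_def using assms(2,3) by (intro connected_Times connected_sing connected_perp_sq_pos)
    have "(0, b) \<in> ({a. perp_sq \<alpha> a < perp_sq \<beta> b} \<times> {b}) \<inter> ({0} \<times> B)"
      using that by (simp add: B_def perp_sq_def)
    then show "({a. perp_sq \<alpha> a < perp_sq \<beta> b} \<times> {b}) \<inter> ({0} \<times> B) \<noteq> {}"
      by blast
  qed
  moreover have "{0} \<times> B \<subseteq> \<Inter> (T ` B)"
    by (auto simp: T_def)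
  ultimately have "connected (\<Union> (T ` B))"
    by (intro connected_Union) auto
  moreover have "\<Union> (T ` B) = {(a, b). perp_sq \<alpha> a < perp_sq \<beta> b}"
  proof
    show "\<Union> (T ` B) \<subseteq> {(a, b). perp_sq \<alpha> a < perp_sq \<beta> b}"
      by (auto simp: T_def B_def perp_sq_def)
    show "{(a, b). perp_sq \<alpha> a < perp_sq \<beta> b} \<subseteq> \<Union> (T ` B)"
    proof clarify
      fix a b
      assume "perp_sq \<alpha> a < perp_sq \<beta> b"
      moreover from this have "b \<in> B"
        using perp_sq_nonneg[OF assms(1), of a] by (simp add: B_def)
      ultimately show "(a, b) \<in> \<Union> (T ` B)"
        by (auto simp: T_def)
    qed
  qed
  ultimately show ?thesis
    by simp
qed

lemma connected_perp_sq_greater: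
  fixes \<alpha> :: "'a::euclidean_space" and \<beta> :: "'b::euclidean_space"
  assumes "norm \<alpha> = 1" "norm \<beta> = 1" "DIM('a) \<ge> 3"
  shows "connected {(a, b). perp_sq \<beta> b < perp_sq \<alpha> a}"
proof -
  have "connected (prod.swap ` {(b, a). perp_sq \<beta> b < perp_sq \<alpha> a})"
    using assms by (intro connected_continuous_image[OF continuous_on_swap] connected_perp_sq_less)
  moreover have "prod.swap ` {(b, a). perp_sq \<beta> b < perp_sq \<alpha> a} = {(a, b). perp_sq \<beta> b < perp_sq \<alpha> a}"
    by force
  ultimately show ?thesis
    by simp
qed

definition pos_patch :: "(real^'p) \<times> (real^'q) \<Rightarrow> ((real^'p) \<times> (real^'q)) set" where
  "pos_patch w = {u \<in> tEin. 0 < Bform w u}"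

definition dual_null :: "(real^'p) \<times> (real^'q) \<Rightarrow> (real^'p) \<times> (real^'q)" where
  "dual_null v = (1/2) *\<^sub>R (fst v, - snd v)"

definition transverse :: "(real^'p) \<times> (real^'q) \<Rightarrow> (real^'p) \<times> (real^'q) \<Rightarrow> (real^'p) \<times> (real^'q)" where
  "transverse v x = x - Bform x (dual_null v) *\<^sub>R v - Bform x v *\<^sub>R dual_null v"

text \<open>For \<open>v\<close> with unit components, \<open>cone_chart v\<close> is a parametrisation of the section
  \<open>{y. B(y,y) = 0 \<and> B(v,y) = 1}\<close> of the light cone by the transverse part of its argument.\<close>

definition cone_chart :: "(real^'p) \<times> (real^'q) \<Rightarrow> (real^'p) \<times> (real^'q) \<Rightarrow> (real^'p) \<times> (real^'q)" where
  "cone_chart v x =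
     dual_null v + transverse v x - (Bform (transverse v x) (transverse v x) / 2) *\<^sub>R v"

lemma Bform_dual_null:
  assumes "norm (fst v) = 1" "norm (snd v) = 1"
  shows "Bform v v = 0" "Bform (dual_null v) (dual_null v) = 0" "Bform v (dual_null v) = 1"
proof -
  have "fst v \<bullet> fst v = 1" "snd v \<bullet> snd v = 1"
    using assms by (simp_all add: dot_square_norm)
  then show "Bform v v = 0" "Bform (dual_null v) (dual_null v) = 0" "Bform v (dual_null v) = 1"
    by (simp_all add: Bform_def dual_null_def)
qed

lemma Bform_transverse_self:
  assumes "norm (fst v) = 1" "norm (snd v) = 1"
  shows "Bform (transverse v y) (transverse v y) = perp_sq (fst v) (fst y) - perp_sq (snd v) (snd y)"
proof -
  have "Bform (transverse v y) (transverse v y) = Bform y y - 2 * Bform y (dual_null v) * Bform y v"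
    using Bform_dual_null[OF assms]
    by (simp add: transverse_def Bform_bilinear Bform_commute algebra_simps)
  also have "\<dots> = perp_sq (fst v) (fst y) - perp_sq (snd v) (snd y)"
    unfolding Bform_def dual_null_def perp_sq_def power2_norm_eq_inner
    by (simp add: inner_commute power2_eq_square algebra_simps)
  finally show ?thesis .
qed

lemma Bform_cone_chart:
  assumes "norm (fst v) = 1" "norm (snd v) = 1"
  shows "Bform (cone_chart v x) (cone_chart v x) = 0" "Bform v (cone_chart v x) = 1"
  using Bform_dual_null[OF assms] unfolding cone_chart_def transverse_def
  by (simp_all add: Bform_bilinear Bform_commute algebra_simps)

lemma cone_chart_nonzero:
  assumes "norm (fst v) = 1" "norm (snd v) = 1"
  shows "cone_chart v x \<noteq> 0"
  using Bform_cone_chart(2)[OF assms, of x] by (auto simp: Bform_bilinear)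

lemma cone_chart_eq_self:
  assumes "norm (fst v) = 1" "norm (snd v) = 1" and "Bform x x = 0" "Bform v x = 1"
  shows "cone_chart v x = x"
proof -
  have "Bform (transverse v x) (transverse v x) = -2 * Bform x (dual_null v)"
    using Bform_dual_null[OF assms(1,2)] assms(3,4)
    by (simp add: transverse_def Bform_bilinear Bform_commute algebra_simps)
  then show ?thesis
    using assms(4) by (simp add: cone_chart_def transverse_def Bform_commute algebra_simps)
qed

lemma Bform_cone_chart_expand:
  "Bform w (cone_chart v x) = Bform w (dual_null v) + Bform (transverse v w) x
     - Bform w v / 2 * Bform (transverse v x) (transverse v x)"
proof -
  have "Bform w (transverse v x) = Bform (transverse v w) x"
    by (simp add: transverse_def Bform_bilinear Bform_commute)
  then show ?thesis
    by (simp add: cone_chart_def Bform_bilinear)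
qed

text \<open>Completing the square; isotropy of \<open>w\<close> makes the constant term vanish.\<close>

lemma Bform_cone_chart_square:
  assumes "norm (fst v) = 1" "norm (snd v) = 1" "Bform w w = 0" "Bform w v \<noteq> 0"
  defines "z \<equiv> (1 / Bform w v) *\<^sub>R transverse v w"
  shows "Bform w (cone_chart v x) =
    - (Bform w v / 2) * Bform (transverse v (x - z)) (transverse v (x - z))"
  using Bform_dual_null[OF assms(1,2)] assms(3,4)
  unfolding Bform_cone_chart_expand z_def transverse_def
  by (simp add: Bform_bilinear Bform_commute field_simps)

lemma connected_shifted_Collect:
  fixes z :: "'a::real_normed_vector"
  assumes "connected {y. P y}"
  shows "connected {x. P (x - z)}"
proof -
  have "{x. P (x - z)} = (\<lambda>y. y + z) ` {y. P y}"
    by (auto simp: image_iff) (metis diff_add_cancel)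
  moreover have "continuous_on {y. P y} (\<lambda>y. y + z)"
    by (intro continuous_intros)
  ultimately show ?thesis
    using assms connected_continuous_image by metis
qed

lemma connected_transverse_neg:
  fixes v :: "(real^'p::finite) \<times> (real^'q::finite)"
  assumes "CARD('q) \<ge> 3" "norm (fst v) = 1" "norm (snd v) = 1"
  shows "connected {y. Bform (transverse v y) (transverse v y) < 0}"
proof -
  have "{y. Bform (transverse v y) (transverse v y) < 0} =
      {(a, b). perp_sq (fst v) a < perp_sq (snd v) b}"
    by (auto simp: Bform_transverse_self[OF assms(2,3)])
  then show ?thesis
    using assms by (simp add: connected_perp_sq_less)
qed

lemma connected_transverse_pos:
  fixes v :: "(real^'p::finite) \<times> (real^'q::finite)"
  assumes "CARD('p) \<ge> 3" "norm (fst v) = 1" "norm (snd v) = 1"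
  shows "connected {y. 0 < Bform (transverse v y) (transverse v y)}"
proof -
  have "{y. 0 < Bform (transverse v y) (transverse v y)} =
      {(a, b). perp_sq (snd v) b < perp_sq (fst v) a}"
    by (auto simp: Bform_transverse_self[OF assms(2,3)])
  then show ?thesis
    using assms by (simp add: connected_perp_sq_greater)
qed

lemma connected_cone_chart_pos:
  fixes v w :: "(real^'p::finite) \<times> (real^'q::finite)"
  assumes "CARD('p) \<ge> 3" "CARD('q) \<ge> 3" and unit: "norm (fst v) = 1" "norm (snd v) = 1"
    and "Bform w w = 0"
  shows "connected {x. 0 < Bform w (cone_chart v x)}"
proof (cases "Bform w v = 0")
  case True
  let ?h = "(fst (transverse v w), - snd (transverse v w))"
  have "{x. 0 < Bform w (cone_chart v x)} = {x. - Bform w (dual_null v) < ?h \<bullet> x}"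
    using True by (auto simp: Bform_cone_chart_expand Bform_eq_inner[of "transverse v w"])
  then show ?thesis
    by (simp add: convex_connected convex_halfspace_gt)
next
  case False
  define z where "z = (1 / Bform w v) *\<^sub>R transverse v w"
  have square: "Bform w (cone_chart v x) =
      - (Bform w v / 2) * Bform (transverse v (x - z)) (transverse v (x - z))" for x
    using Bform_cone_chart_square[OF unit assms(5) False] by (simp add: z_def)
  consider "0 < Bform w v" | "Bform w v < 0"
    using False by linarith
  then show ?thesis
  proof cases
    case 1
    then have "{x. 0 < Bform w (cone_chart v x)} =
        {x. Bform (transverse v (x - z)) (transverse v (x - z)) < 0}"
      by (auto simp: square zero_less_mult_iff mult_less_0_iff)
    then show ?thesis
      using connected_shifted_Collect[OF connected_transverse_neg] assms by simp
  next
    case 2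
    then have "{x. 0 < Bform w (cone_chart v x)} =
        {x. 0 < Bform (transverse v (x - z)) (transverse v (x - z))}"
      by (auto simp: square zero_less_mult_iff mult_less_0_iff)
    then show ?thesis
      using connected_shifted_Collect[OF connected_transverse_pos] assms by simp
  qed
qed

lemma pos_patch_Int_eq_sgn_cone_chart:
  assumes unit: "norm (fst v) = 1" "norm (snd v) = 1"
  shows "pos_patch v \<inter> pos_patch w = (\<lambda>x. sgn (cone_chart v x)) ` {x. 0 < Bform w (cone_chart v x)}"
proof
  show "pos_patch v \<inter> pos_patch w \<subseteq> (\<lambda>x. sgn (cone_chart v x)) ` {x. 0 < Bform w (cone_chart v x)}"
  proof
    fix u
    assume u: "u \<in> pos_patch v \<inter> pos_patch w"
    define t where "t = Bform v u"
    have "0 < t" "norm u = 1" "Bform u u = 0"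
      using u by (simp_all add: t_def pos_patch_def tEin_def)
    define x where "x = (1 / t) *\<^sub>R u"
    have "Bform x x = 0" "Bform v x = 1"
      using \<open>0 < t\<close> \<open>Bform u u = 0\<close> by (simp_all add: x_def Bform_bilinear t_def)
    then have chart: "cone_chart v x = x"
      using unit by (rule cone_chart_eq_self[rotated 2])
    have "0 < Bform w x"
      using u \<open>0 < t\<close> by (simp add: x_def Bform_bilinear pos_patch_def)
    moreover have "sgn x = u"
      using \<open>0 < t\<close> \<open>norm u = 1\<close> by (simp add: x_def sgn_div_norm)
    ultimately show "u \<in> (\<lambda>x. sgn (cone_chart v x)) ` {x. 0 < Bform w (cone_chart v x)}"
      by (intro image_eqI[where x = x]) (simp_all add: chart)
  qed
  show "(\<lambda>x. sgn (cone_chart v x)) ` {x. 0 < Bform w (cone_chart v x)} \<subseteq> pos_patch v \<inter> pos_patch w"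
  proof
    fix y
    assume "y \<in> (\<lambda>x. sgn (cone_chart v x)) ` {x. 0 < Bform w (cone_chart v x)}"
    then obtain x where x: "0 < Bform w (cone_chart v x)" and y: "y = sgn (cone_chart v x)"
      by blast
    have "0 < norm (cone_chart v x)"
      using cone_chart_nonzero[OF unit] by simp
    then show "y \<in> pos_patch v \<inter> pos_patch w"
      using x Bform_cone_chart[OF unit, of x] cone_chart_nonzero[OF unit, of x]
      by (simp add: y pos_patch_def tEin_def sgn_div_norm Bform_bilinear norm_sgn)
  qed
qed

lemma connected_pos_patch_Int:
  fixes v w :: "(real^'p::finite) \<times> (real^'q::finite)"
  assumes "CARD('p) \<ge> 3" "CARD('q) \<ge> 3" and unit: "norm (fst v) = 1" "norm (snd v) = 1"
    and "Bform w w = 0"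
  shows "connected (pos_patch v \<inter> pos_patch w)"
proof -
  have "continuous_on UNIV (cone_chart v)"
    unfolding cone_chart_def transverse_def by (intro continuous_intros) auto
  then have "continuous_on UNIV (\<lambda>x. sgn (cone_chart v x))"
    using cone_chart_nonzero[OF unit] by (intro continuous_on_sgn) auto
  then show ?thesis
    unfolding pos_patch_Int_eq_sgn_cone_chart[OF unit]
    by (rule connected_continuous_image[OF continuous_on_subset connected_cone_chart_pos[OF assms]]) simp
qed

lemma tEin_uminus: "u \<in> tEin \<Longrightarrow> - u \<in> tEin"
  by (simp add: tEin_def Bform_bilinear)

lemma mem_piX_iff: "w \<in> piX v \<longleftrightarrow> (\<exists>t. w = t *\<^sub>R v)"
  by (auto simp: piX_def)

lemma piX_scaleR:
  assumes "t \<noteq> 0"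
  shows "piX (t *\<^sub>R v) = piX v"
proof (intro set_eqI iffI)
  fix w
  assume "w \<in> piX (t *\<^sub>R v)"
  then show "w \<in> piX v"
    by (auto simp: mem_piX_iff)
next
  fix w
  assume "w \<in> piX v"
  then obtain s where "w = s *\<^sub>R v"
    by (auto simp: mem_piX_iff)
  then have "w = (s / t) *\<^sub>R (t *\<^sub>R v)"
    using assms by simp
  then show "w \<in> piX (t *\<^sub>R v)"
    unfolding mem_piX_iff by blast
qed

lemma piX_uminus: "piX (- v) = piX v"
  using piX_scaleR[of "-1" v] by simp

lemma piX_in_Ein:
  assumes "u \<in> tEin"
  shows "piX u \<in> Ein"
proof -
  have "u \<noteq> 0" "Bform u u = 0"
    using assms by (auto simp: tEin_def)
  then show ?thesis
    unfolding Ein_def by blast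
qed

lemma Ein_obtains_tEin:
  assumes "y \<in> Ein"
  obtains u where "u \<in> tEin" "y = piX u"
proof -
  obtain v where v: "y = piX v" "v \<noteq> 0" "Bform v v = 0"
    using assms by (auto simp: Ein_def)
  then have "(1 / norm v) *\<^sub>R v \<in> tEin"
    by (simp add: tEin_def Bform_bilinear)
  moreover have "y = piX ((1 / norm v) *\<^sub>R v)"
    using v by (simp add: piX_scaleR)
  ultimately show ?thesis
    using that by blast
qed

lemma piX_eq_piX_tEin:
  assumes "u \<in> tEin" "w \<in> tEin" "piX u = piX w"
  shows "w = u \<or> w = - u"
proof -
  have "w \<in> piX w"
    by (metis mem_piX_iff scaleR_one)
  then have "w \<in> piX u"
    using assms(3) by simp
  then obtain t where t: "w = t *\<^sub>R u"
    by (auto simp: mem_piX_iff)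
  then have "\<bar>t\<bar> = 1"
    using assms(1,2) by (simp add: tEin_def)
  then have "t = 1 \<or> t = -1"
    by auto
  then show ?thesis
    using t by auto
qed

lemma piX_mem_piX_image_iff:
  assumes "X \<subseteq> tEin" "u \<in> tEin"
  shows "piX u \<in> piX ` X \<longleftrightarrow> u \<in> X \<or> - u \<in> X"
proof
  assume "piX u \<in> piX ` X"
  then obtain x where x: "x \<in> X" "piX u = piX x"
    by auto
  then have "x = u \<or> x = - u"
    using piX_eq_piX_tEin[OF assms(2)] assms(1) by blast
  then show "u \<in> X \<or> - u \<in> X"
    using x(1) by auto
next
  assume "u \<in> X \<or> - u \<in> X"
  then show "piX u \<in> piX ` X"
    by (metis image_eqI piX_uminus)
qed

lemma istopology_Ein_top:
  "istopology (\<lambda>U. U \<subseteq> Ein \<and> openin (top_of_set tEin) {v \<in> tEin. piX v \<in> U})"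
    (is "istopology ?L")
proof -
  have "?L (S \<inter> T)" if "?L S" "?L T" for S T
  proof -
    have "{v \<in> tEin. piX v \<in> S \<inter> T} = {v \<in> tEin. piX v \<in> S} \<inter> {v \<in> tEin. piX v \<in> T}"
      by auto
    then show ?thesis
      using that by auto
  qed
  moreover have "?L (\<Union>K)" if "\<forall>S\<in>K. ?L S" for K
  proof -
    have "{v \<in> tEin. piX v \<in> \<Union>K} = (\<Union>S\<in>K. {v \<in> tEin. piX v \<in> S})"
      by auto
    then show ?thesis
      using that by auto
  qed
  ultimately show ?thesis
    unfolding istopology_def by blast
qed

lemma openin_Ein_top:
  "openin Ein_top U \<longleftrightarrow> U \<subseteq> Ein \<and> openin (top_of_set tEin) {v \<in> tEin. piX v \<in> U}"
  unfolding Ein_top_def by (simp add: istopology_Ein_top)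

lemma topspace_Ein_top: "topspace Ein_top = Ein"
proof -
  have preimage: "{v \<in> tEin. piX v \<in> Ein} = tEin"
    using piX_in_Ein by auto
  have "openin Ein_top Ein"
    unfolding openin_Ein_top preimage by simp
  then show ?thesis
    unfolding topspace_def using openin_Ein_top by auto
qed

lemma continuous_map_piX: "continuous_map (top_of_set tEin) Ein_top piX"
  unfolding continuous_map topspace_Ein_top using piX_in_Ein openin_Ein_top by auto

lemma connectedin_piX_image:
  assumes "connected S" "S \<subseteq> tEin"
  shows "connectedin Ein_top (piX ` S)"
  using assms by (intro connectedin_continuous_map_image[OF continuous_map_piX])
    (simp add: connectedin_subtopology)

lemma clopen_in_connected_components_of:
  assumes "connectedin X C" "openin X C" "closedin X C" "C \<noteq> {}"
  shows "C \<in> connected_components_of X"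
proof -
  obtain x where x: "x \<in> C"
    using assms(4) by auto
  then have "x \<in> topspace X"
    using openin_subset[OF assms(2)] by auto
  then have component: "connected_component_of_set X x \<in> connected_components_of X"
    by (simp add: connected_component_in_connected_components_of)
  have "C \<subseteq> connected_component_of_set X x"
    by (rule connected_component_of_maximal[OF assms(1) x])
  moreover have "connected_component_of_set X x \<subseteq> C \<or> disjnt (connected_component_of_set X x) C"
    by (rule connectedin_clopen_cases[OF connectedin_connected_component_of assms(3,2)])
  ultimately have "connected_component_of_set X x = C"
    using x by (auto simp: disjnt_def)
  then show ?thesis
    using component by simp
qed

text \<open>\<open>C\<close> is clopen in \<open>A\<close> because \<open>C\<close> and \<open>A - C\<close> have the open preimages \<open>{f > 0}\<close>
  and \<open>{f < 0}\<close>.\<close>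

lemma connected_components_of_Ein_sign:
  fixes f :: "(real^'p) \<times> (real^'q) \<Rightarrow> real"
  assumes "continuous_on tEin f" and "A \<subseteq> Ein" "C \<subseteq> Ein"
    and A: "\<And>u. u \<in> tEin \<Longrightarrow> piX u \<in> A \<longleftrightarrow> f u \<noteq> 0"
    and C: "\<And>u. u \<in> tEin \<Longrightarrow> piX u \<in> C \<longleftrightarrow> 0 < f u"
    and "connectedin Ein_top C" "C \<noteq> {}"
  shows "C \<in> connected_components_of (subtopology Ein_top A)"
proof -
  have "C \<subseteq> A"
  proof
    fix y
    assume "y \<in> C"
    then obtain u where "u \<in> tEin" "y = piX u"
      using \<open>C \<subseteq> Ein\<close> Ein_obtains_tEin by blast
    then show "y \<in> A"
      using A C \<open>y \<in> C\<close> by auto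
  qed
  have "{u \<in> tEin. piX u \<in> C} = tEin \<inter> f -` {0<..}"
    using C by auto
  then have "openin Ein_top C"
    unfolding openin_Ein_top using \<open>C \<subseteq> Ein\<close> continuous_openin_preimage_gen[OF assms(1)] by simp
  have "{u \<in> tEin. piX u \<in> A - C} = tEin \<inter> f -` {..<0}"
    using A C by force
  then have "openin Ein_top (A - C)"
    unfolding openin_Ein_top using \<open>A \<subseteq> Ein\<close> continuous_openin_preimage_gen[OF assms(1)] by auto
  then have "closedin Ein_top (Ein - (A - C))"
    by (simp add: closedin_diff topspace_Ein_top[symmetric])
  moreover have "C = (Ein - (A - C)) \<inter> A"
    using \<open>C \<subseteq> A\<close> \<open>A \<subseteq> Ein\<close> by auto
  ultimately have "closedin (subtopology Ein_top A) C"
    by (auto simp: closedin_subtopology)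
  moreover have "openin (subtopology Ein_top A) C"
    using \<open>openin Ein_top C\<close> \<open>C \<subseteq> A\<close> by (auto simp: openin_subtopology)
  moreover have "connectedin (subtopology Ein_top A) C"
    using assms(6) \<open>C \<subseteq> A\<close> by (simp add: connectedin_subtopology)
  ultimately show ?thesis
    using assms(7) by (intro clopen_in_connected_components_of)
qed

lemma preimage_mink_patch_Ein:
  assumes "v \<noteq> 0"
  shows "tEin \<inter> piX -` mink_patch_Ein (piX v) = {u \<in> tEin. Bform v u \<noteq> 0}"
proof
  show "tEin \<inter> piX -` mink_patch_Ein (piX v) \<subseteq> {u \<in> tEin. Bform v u \<noteq> 0}"
  proof
    fix u
    assume u: "u \<in> tEin \<inter> piX -` mink_patch_Ein (piX v)"
    then obtain v' w where vw: "piX v = piX v'" "piX u = piX w" "Bform v' w \<noteq> 0"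
      by (auto simp: mink_patch_Ein_def)
    obtain s where s: "v = s *\<^sub>R v'"
      using vw(1) by (metis mem_piX_iff scaleR_one)
    obtain t where t: "u = t *\<^sub>R w"
      using vw(2) by (metis mem_piX_iff scaleR_one)
    have "s \<noteq> 0" "t \<noteq> 0"
      using s t assms u by (auto simp: tEin_def)
    then have "Bform v u \<noteq> 0"
      using vw(3) by (simp add: s t Bform_bilinear)
    then show "u \<in> {u \<in> tEin. Bform v u \<noteq> 0}"
      using u by simp
  qed
  show "{u \<in> tEin. Bform v u \<noteq> 0} \<subseteq> tEin \<inter> piX -` mink_patch_Ein (piX v)"
  proof
    fix u
    assume u: "u \<in> {u \<in> tEin. Bform v u \<noteq> 0}"
    then have "piX u \<in> mink_patch_Ein (piX v)"
      unfolding mink_patch_Ein_def using piX_in_Ein by blast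
    then show "u \<in> tEin \<inter> piX -` mink_patch_Ein (piX v)"
      using u by simp
  qed
qed

lemma connected_component_set_sign:
  fixes f :: "'a::topological_space \<Rightarrow> real"
  assumes "continuous_on S f" "\<And>x. x \<in> S \<Longrightarrow> f x \<noteq> 0"
    and "connected {x \<in> S. 0 < f x}" "u \<in> S" "0 < f u"
  shows "connected_component_set S u = {x \<in> S. 0 < f x}"
proof
  show "{x \<in> S. 0 < f x} \<subseteq> connected_component_set S u"
    using assms(3-5) by (intro connected_component_maximal) auto
  show "connected_component_set S u \<subseteq> {x \<in> S. 0 < f x}"
  proof
    fix y
    assume y: "y \<in> connected_component_set S u"
    then have "y \<in> S"
      using connected_component_subset by blast
    have "connected (f ` connected_component_set S u)"
      by (intro connected_continuous_image continuous_on_subset[OF assms(1)]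
          connected_component_subset connected_connected_component)
    moreover have "f u \<in> f ` connected_component_set S u" "f y \<in> f ` connected_component_set S u"
      using assms(4) y by auto
    ultimately have "f y \<le> 0 \<Longrightarrow> 0 \<in> f ` connected_component_set S u"
      using assms(5) unfolding connected_iff_interval by (meson less_imp_le)
    then have "0 < f y"
      using assms(2) connected_component_subset by fastforce
    then show "y \<in> {x \<in> S. 0 < f x}"
      using \<open>y \<in> S\<close> by simp
  qed
qed

lemma connected_pos_patch:
  fixes w :: "(real^'p::finite) \<times> (real^'q::finite)"
  assumes "CARD('p) \<ge> 3" "CARD('q) \<ge> 3" and unit: "norm (fst w) = 1" "norm (snd w) = 1"
  shows "connected (pos_patch w)"
  using connected_pos_patch_Int[OF assms Bform_dual_null(1)[OF unit]] by simp

lemma mink_patch_tEin_obtains_pos_patch: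
  fixes M :: "((real^'p::finite) \<times> (real^'q::finite)) set"
  assumes "CARD('p) \<ge> 3" "CARD('q) \<ge> 3" "mink_patch_tEin M"
  obtains w where "norm (fst w) = 1" "norm (snd w) = 1" "M = pos_patch w"
proof -
  obtain v where v: "v \<noteq> 0" "Bform v v = 0" "M \<in> components (tEin \<inter> piX -` mink_patch_Ein (piX v))"
    using assms(3) by (auto simp: mink_patch_tEin_def Ein_def)
  have norms: "norm (snd v) = norm (fst v)"
    using v(2) by (simp add: Bform_def norm_eq_sqrt_inner)
  then have "0 < norm (fst v)"
    using v(1) by (auto simp: prod_eq_iff)
  define w where "w = (1 / norm (fst v)) *\<^sub>R v"
  have "Bform w u \<noteq> 0 \<longleftrightarrow> Bform v u \<noteq> 0" for u
    using \<open>0 < norm (fst v)\<close> by (simp add: w_def Bform_bilinear)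
  then obtain u where u: "u \<in> tEin" "Bform w u \<noteq> 0"
    and M: "M = connected_component_set {u \<in> tEin. Bform w u \<noteq> 0} u"
    using v(3) unfolding preimage_mink_patch_Ein[OF v(1)] components_iff by auto
  obtain w' where w': "w' = w \<or> w' = - w" "0 < Bform w' u"
    using u(2) by (metis Bform_bilinear(7) neg_0_less_iff_less linorder_neqE_linordered_idom)
  then have unit: "norm (fst w') = 1" "norm (snd w') = 1"
    using \<open>0 < norm (fst v)\<close> norms by (auto simp: w_def)
  have "{x \<in> tEin. Bform w x \<noteq> 0} = {x \<in> tEin. Bform w' x \<noteq> 0}"
    using w'(1) by (auto simp: Bform_bilinear)
  then have "M = connected_component_set {x \<in> tEin. Bform w' x \<noteq> 0} u"
    using M by simp
  also have "\<dots> = {x \<in> {x \<in> tEin. Bform w' x \<noteq> 0}. 0 < Bform w' x}"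
  proof (rule connected_component_set_sign)
    show "continuous_on {x \<in> tEin. Bform w' x \<noteq> 0} (Bform w')"
      by (intro continuous_intros)
    have "{x \<in> {x \<in> tEin. Bform w' x \<noteq> 0}. 0 < Bform w' x} = pos_patch w'"
      by (auto simp: pos_patch_def)
    then show "connected {x \<in> {x \<in> tEin. Bform w' x \<noteq> 0}. 0 < Bform w' x}"
      using connected_pos_patch[OF assms(1,2) unit] by simp
  qed (use u(1) w'(2) in auto)
  also have "\<dots> = pos_patch w'"
    by (auto simp: pos_patch_def)
  finally show ?thesis
    using that unit by blast
qed

lemma pos_patch_subset_tEin: "pos_patch w \<subseteq> tEin"
  by (auto simp: pos_patch_def)

lemma piX_mem_piX_image_pos_patch:
  assumes "u \<in> tEin"
  shows "piX u \<in> piX ` pos_patch w \<longleftrightarrow> Bform w u \<noteq> 0"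
proof -
  have "piX u \<in> piX ` pos_patch w \<longleftrightarrow> u \<in> pos_patch w \<or> - u \<in> pos_patch w"
    by (rule piX_mem_piX_image_iff[OF pos_patch_subset_tEin assms])
  also have "\<dots> \<longleftrightarrow> Bform w u \<noteq> 0"
    using assms tEin_uminus[OF assms] by (auto simp: pos_patch_def Bform_bilinear)
  finally show ?thesis .
qed

lemma piX_mem_piX_image_pos_patch_Int:
  assumes "u \<in> tEin"
  shows "piX u \<in> piX ` (pos_patch v \<inter> pos_patch w) \<longleftrightarrow> 0 < Bform v u * Bform w u"
proof -
  have "piX u \<in> piX ` (pos_patch v \<inter> pos_patch w)
      \<longleftrightarrow> u \<in> pos_patch v \<inter> pos_patch w \<or> - u \<in> pos_patch v \<inter> pos_patch w"
    using pos_patch_subset_tEin[of v] assms by (intro piX_mem_piX_image_iff) auto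
  also have "\<dots> \<longleftrightarrow> 0 < Bform v u * Bform w u"
    using assms tEin_uminus[OF assms]
    by (auto simp: pos_patch_def Bform_bilinear zero_less_mult_iff)
  finally show ?thesis .
qed

theorem mainTheorem5:
  fixes M1 M2 :: "((real^'p::finite) \<times> (real^'q::finite)) set"
  assumes "CARD('p) \<ge> 3" and "CARD('q) \<ge> 3"
    and "mink_patch_tEin M1" and "mink_patch_tEin M2"
    and "M1 \<inter> M2 \<noteq> {}"
  shows "piX ` (M1 \<inter> M2) \<in> connected_components_of (subtopology Ein_top (piX ` M1 \<inter> piX ` M2))"
proof -
  obtain w1 where w1: "norm (fst w1) = 1" "norm (snd w1) = 1" "M1 = pos_patch w1"
    using mink_patch_tEin_obtains_pos_patch[OF assms(1,2,3)] .
  obtain w2 where w2: "norm (fst w2) = 1" "norm (snd w2) = 1" "M2 = pos_patch w2"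
    using mink_patch_tEin_obtains_pos_patch[OF assms(1,2,4)] .
  have patches_in_tEin: "M1 \<subseteq> tEin" "M2 \<subseteq> tEin"
    by (simp_all add: w1(3) w2(3) pos_patch_subset_tEin)
  have "connected (M1 \<inter> M2)"
    unfolding w1(3) w2(3) using assms(1,2) w1(1,2) Bform_dual_null(1)[OF w2(1,2)]
    by (rule connected_pos_patch_Int)
  then have "connectedin Ein_top (piX ` (M1 \<inter> M2))"
    using patches_in_tEin by (intro connectedin_piX_image) auto
  then show ?thesis
  proof (rule connected_components_of_Ein_sign[where f = "\<lambda>u. Bform w1 u * Bform w2 u", rotated -2])
    show "continuous_on tEin (\<lambda>u. Bform w1 u * Bform w2 u)"
      by (intro continuous_intros)
    show "piX ` M1 \<inter> piX ` M2 \<subseteq> Ein" "piX ` (M1 \<inter> M2) \<subseteq> Ein"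
      using patches_in_tEin piX_in_Ein by auto
    show "piX u \<in> piX ` M1 \<inter> piX ` M2 \<longleftrightarrow> Bform w1 u * Bform w2 u \<noteq> 0" if "u \<in> tEin" for u
      using that by (simp add: w1(3) w2(3) piX_mem_piX_image_pos_patch)
    show "piX u \<in> piX ` (M1 \<inter> M2) \<longleftrightarrow> 0 < Bform w1 u * Bform w2 u" if "u \<in> tEin" for u
      using that by (simp add: w1(3) w2(3) piX_mem_piX_image_pos_patch_Int)
    show "piX ` (M1 \<inter> M2) \<noteq> {}"
      using assms(5) by simp
  qed
qed

end
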